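(* Let $G$ and $H$ be connected graphs, not both complete, with $|V(G)|=s$, $|V(H)|=t$, $s\le t$ (and $t\ge 3$). Let $c_1=\max\{rx_3(G),rx_3(H)\}$ when both are defined. Then: (1) if $s=1$, then $rx_3(G\vee H)\le rx_3(H)+1$; (2) if $s=2$, then $rx_3(G\vee H)\le\min\{rc(H)+3,\ rx_3(K_{2,t})\}$; (3) if $3\le s\le t$, then $rx_3(G\vee H)\le\min\{c_1+1,\ rx_3(K_{s,t})\}$. In particular, if $s=t\ge 3$, then $rx_3(G\vee H)=rx_3(K_{s,t})=3$.
   Context: The join $G\vee H$ is obtained from the disjoint union of $G$ and $H$ by adding all edges joining every vertex of $G$ to every vertex of $H$. $K_{s,t}$ is the complete bipartite graph with parts of sizes $s,t$. An edge coloring may give adjacent edges the same color; a path (tree) is rainbow if its edges have pairwise distinct colors. $rc(H)$ is the minimum number of colors in an edge coloring of $H$ such that every two vertices are joined by a rainbow path. For a connected graph on at least $3$ vertices, $rx_3$ is the minimum number of colors in an edge coloring such that every set of $3$ vertices lies in some rainbow tree. *)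

theory Defs
  imports Main
begin

definition graph :: "'a set \<Rightarrow> 'a set set \<Rightarrow> bool" where
  "graph V E \<longleftrightarrow> finite V \<and> (\<forall>e\<in>E. e \<subseteq> V \<and> card e = 2)"

definition is_path :: "'a set set \<Rightarrow> 'a list \<Rightarrow> bool" where
  "is_path E xs \<longleftrightarrow> xs \<noteq> [] \<and> distinct xs \<and>
     (\<forall>i. Suc i < length xs \<longrightarrow> {xs ! i, xs ! Suc i} \<in> E)"

definition path_edges :: "'a list \<Rightarrow> 'a set set" where
  "path_edges xs = {{xs ! i, xs ! Suc i} | i. Suc i < length xs}"

definition path_between :: "'a set set \<Rightarrow> 'a list \<Rightarrow> 'a \<Rightarrow> 'a \<Rightarrow> bool" where
  "path_between E xs u v \<longleftrightarrow> is_path E xs \<and> hd xs = u \<and> last xs = v"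

definition connected_graph :: "'a set \<Rightarrow> 'a set set \<Rightarrow> bool" where
  "connected_graph V E \<longleftrightarrow> graph V E \<and> V \<noteq> {} \<and>
     (\<forall>u\<in>V. \<forall>v\<in>V. \<exists>xs. path_between E xs u v)"

definition complete_graph :: "'a set \<Rightarrow> 'a set set \<Rightarrow> bool" where
  "complete_graph V E \<longleftrightarrow> (\<forall>u\<in>V. \<forall>v\<in>V. u \<noteq> v \<longrightarrow> {u, v} \<in> E)"

definition is_tree :: "'a set set \<Rightarrow> bool" where
  "is_tree T \<longleftrightarrow> finite T \<and> T \<noteq> {} \<and>
     (\<forall>u\<in>\<Union>T. \<forall>v\<in>\<Union>T. \<exists>xs. path_between T xs u v) \<and>
     card T + 1 = card (\<Union>T)"

definition rc :: "'a set \<Rightarrow> 'a set set \<Rightarrow> nat" where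
  "rc V E = (LEAST k. \<exists>c :: 'a set \<Rightarrow> nat. (\<forall>e\<in>E. c e < k) \<and>
     (\<forall>u\<in>V. \<forall>v\<in>V. u \<noteq> v \<longrightarrow>
        (\<exists>xs. path_between E xs u v \<and> inj_on c (path_edges xs))))"

definition rx3 :: "'a set \<Rightarrow> 'a set set \<Rightarrow> nat" where
  "rx3 V E = (LEAST k. \<exists>c :: 'a set \<Rightarrow> nat. (\<forall>e\<in>E. c e < k) \<and>
     (\<forall>S. S \<subseteq> V \<longrightarrow> card S = 3 \<longrightarrow>
        (\<exists>T. T \<subseteq> E \<and> is_tree T \<and> S \<subseteq> \<Union>T \<and> inj_on c T)))"

definition join_V :: "'a set \<Rightarrow> 'b set \<Rightarrow> ('a + 'b) set" where
  "join_V VG VH = Inl ` VG \<union> Inr ` VH"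

definition join_E :: "'a set \<Rightarrow> 'a set set \<Rightarrow> 'b set \<Rightarrow> 'b set set \<Rightarrow> ('a + 'b) set set" where
  "join_E VG EG VH EH = (image Inl) ` EG \<union> (image Inr) ` EH \<union>
     {{Inl u, Inr v} | u v. u \<in> VG \<and> v \<in> VH}"

definition Kbip_V :: "nat \<Rightarrow> nat \<Rightarrow> (nat + nat) set" where
  "Kbip_V s t = Inl ` {0..<s} \<union> Inr ` {0..<t}"

definition Kbip_E :: "nat \<Rightarrow> nat \<Rightarrow> (nat + nat) set set" where
  "Kbip_E s t = {{Inl i, Inr j} | i j. i < s \<and> j < t}"

end

theory Submission
  imports Defs
begin

text \<open>
  All upper bounds come from explicit colourings of the join. If neither side has exactly two
  vertices, colour G and H by optimal 3-rainbow colourings and every cross edge by one new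
  colour: a triple inside one side is spanned by a rainbow tree of that side, and a triple with
  two vertices on one side by a rainbow tree of that side through a third vertex there plus one
  cross edge (for s = 1, rx3 G = 0). If G has two vertices, it is the edge g1 g2; give the
  cross edges at g1, at g2 and the edge g1 g2 three new colours and use rainbow paths of H.
  The bound by rx3 K(s,t) holds because K(s,t) is a spanning subgraph of the join. Finally
  K(s,s) has a rainbow 3-colouring comparing the indices of the ends of an edge, while two
  colours never suffice once five vertices contain a non-adjacent pair.
\<close>

section \<open>Paths and trees\<close>

lemma is_path_mono: "is_path E xs \<Longrightarrow> E \<subseteq> E' \<Longrightarrow> is_path E' xs"
  unfolding is_path_def by blast

lemma path_edges_subset: "is_path E xs \<Longrightarrow> path_edges xs \<subseteq> E"
  unfolding is_path_def path_edges_def by blast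

lemma set_path_subset: "is_path E xs \<Longrightarrow> set xs \<subseteq> insert (hd xs) (\<Union>E)"
proof
  fix v assume p: "is_path E xs" and "v \<in> set xs"
  then obtain i where i: "i < length xs" "v = xs ! i" by (auto simp: in_set_conv_nth)
  show "v \<in> insert (hd xs) (\<Union>E)"
  proof (cases i)
    case 0 then show ?thesis using i p by (auto simp: is_path_def hd_conv_nth)
  next
    case (Suc j)
    then have "{xs ! j, xs ! i} \<in> E" using p i unfolding is_path_def by auto
    then show ?thesis using i by auto
  qed
qed

lemma is_path_Cons:
  assumes "is_path E xs" "y \<notin> set xs" "{y, hd xs} \<in> E"
  shows "is_path E (y # xs)"
  unfolding is_path_def
proof (intro conjI allI impI)
  show "distinct (y # xs)" using assms by (auto simp: is_path_def)
  fix i assume i: "Suc i < length (y # xs)"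
  show "{(y # xs) ! i, (y # xs) ! Suc i} \<in> E"
  proof (cases i)
    case 0 then show ?thesis using assms i by (auto simp: is_path_def hd_conv_nth)
  next
    case (Suc j) then show ?thesis using assms i by (auto simp: is_path_def)
  qed
qed simp

lemma is_path_snoc:
  assumes "is_path E xs" "y \<notin> set xs" "{last xs, y} \<in> E"
  shows "is_path E (xs @ [y])"
  unfolding is_path_def
proof (intro conjI allI impI)
  show "distinct (xs @ [y])" using assms by (auto simp: is_path_def)
  fix i assume i: "Suc i < length (xs @ [y])"
  have ne: "xs \<noteq> []" using assms(1) by (simp add: is_path_def)
  show "{(xs @ [y]) ! i, (xs @ [y]) ! Suc i} \<in> E"
  proof (cases "Suc i < length xs")
    case True then show ?thesis using assms i by (auto simp: is_path_def nth_append)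
  next
    case False
    then have "i = length xs - 1" using i by simp
    then show ?thesis using assms ne by (auto simp: nth_append last_conv_nth)
  qed
qed simp

lemma path_between_two:
  "a \<noteq> b \<Longrightarrow> {a, b} \<in> E \<Longrightarrow> path_between E [a, b] a b"
  by (auto simp: path_between_def intro!: is_path_Cons simp: is_path_def)

lemma path_between_three:
  "distinct [a, b, d] \<Longrightarrow> {a, b} \<in> E \<Longrightarrow> {b, d} \<in> E \<Longrightarrow> path_between E [a, b, d] a d"
  unfolding path_between_def
  by (auto intro!: is_path_Cons path_between_two[unfolded path_between_def, THEN conjunct1])

lemma path_edges_snoc: "path_edges xs \<subseteq> path_edges (xs @ [z])"
  unfolding path_edges_def by (force simp: nth_append)

lemma last_edge_in_path_edges: "xs \<noteq> [] \<Longrightarrow> {last xs, z} \<in> path_edges (xs @ [z])"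
  unfolding path_edges_def
  by (rule CollectI, rule exI[of _ "length xs - 1"]) (auto simp: nth_append last_conv_nth)

lemma is_tree_edge: "x \<noteq> y \<Longrightarrow> is_tree {{x, y}}"
  unfolding is_tree_def
proof (intro conjI ballI)
  fix u v assume "x \<noteq> y" "u \<in> \<Union>{{x, y}}" "v \<in> \<Union>{{x, y}}"
  then show "\<exists>xs. path_between {{x, y}} xs u v"
  proof (cases "u = v")
    case True then show ?thesis by (intro exI[of _ "[u]"]) (simp add: path_between_def is_path_def)
  next
    case False
    then show ?thesis using \<open>u \<in> _\<close> \<open>v \<in> _\<close>
      by (intro exI[of _ "[u, v]"] path_between_two) (auto simp: insert_commute)
  qed
qed auto

lemma finite_Union_tree: "is_tree T \<Longrightarrow> finite (\<Union>T)"
  unfolding is_tree_def by (metis card.infinite add_is_0 one_neq_zero)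

lemma path_between_Cons_leaf:
  assumes p: "path_between T xs x v" and x: "x \<in> \<Union>T" and y: "y \<notin> \<Union>T"
  shows "path_between (insert {x, y} T) (y # xs) y v"
proof -
  have "y \<notin> set xs" using set_path_subset[of T xs] p x y by (auto simp: path_between_def)
  then have "is_path (insert {x, y} T) (y # xs)"
    using p by (intro is_path_Cons is_path_mono[OF _ subset_insertI]) (auto simp: path_between_def insert_commute)
  then show ?thesis using p by (auto simp: path_between_def is_path_def)
qed

lemma path_between_snoc_leaf:
  assumes p: "path_between T xs u x" and u: "u \<in> \<Union>T" and y: "y \<notin> \<Union>T"
  shows "path_between (insert {x, y} T) (xs @ [y]) u y"
proof -
  have "y \<notin> set xs" using set_path_subset[of T xs] p u y by (auto simp: path_between_def)
  then have "is_path (insert {x, y} T) (xs @ [y])"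
    using p by (intro is_path_snoc is_path_mono[OF _ subset_insertI]) (auto simp: path_between_def)
  then show ?thesis using p by (auto simp: path_between_def is_path_def hd_append)
qed

lemma is_tree_insert_leaf:
  assumes T: "is_tree T" and x: "x \<in> \<Union>T" and y: "y \<notin> \<Union>T"
  shows "is_tree (insert {x, y} T)"
proof -
  have U: "\<Union>(insert {x, y} T) = insert y (\<Union>T)" using x by auto
  have "{x, y} \<notin> T" using y by auto
  then have c1: "card (insert {x, y} T) = card T + 1" using T by (simp add: is_tree_def)
  have c2: "card (insert y (\<Union>T)) = card (\<Union>T) + 1" using finite_Union_tree[OF T] y by simp
  have pathT: "\<exists>xs. path_between T xs a b" if "a \<in> \<Union>T" "b \<in> \<Union>T" for a b
    using T that unfolding is_tree_def by blast
  have "\<exists>xs. path_between (insert {x, y} T) xs u v"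
    if u: "u \<in> insert y (\<Union>T)" and v: "v \<in> insert y (\<Union>T)" for u v
  proof -
    consider "u = y" "v = y" | "u = y" "v \<in> \<Union>T" | "u \<in> \<Union>T" "v = y" | "u \<in> \<Union>T" "v \<in> \<Union>T"
      using u v by blast
    then show ?thesis
    proof cases
      case 1 then show ?thesis by (intro exI[of _ "[u]"]) (simp add: path_between_def is_path_def)
    next
      case 2
      then obtain xs where "path_between T xs x v" using pathT x by blast
      from path_between_Cons_leaf[OF this x y] show ?thesis using 2 by blast
    next
      case 3
      then obtain xs where "path_between T xs u x" using pathT x by blast
      from path_between_snoc_leaf[OF this 3(1) y] show ?thesis using 3 by blast
    next
      case 4
      then obtain xs where "path_between T xs u v" using pathT by blast
      then show ?thesis using is_path_mono[OF _ subset_insertI] by (auto simp: path_between_def)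
    qed
  qed
  then show ?thesis unfolding is_tree_def U using T c1 c2 by (auto simp: is_tree_def)
qed

lemma is_tree_extend_along_path:
  assumes "is_tree T" "xs \<noteq> []" "hd xs \<in> \<Union>T"
  shows "\<exists>T'. is_tree T' \<and> T \<subseteq> T' \<and> T' \<subseteq> T \<union> path_edges xs \<and> set xs \<union> \<Union>T \<subseteq> \<Union>T'"
  using assms(2,3)
proof (induction xs rule: rev_induct)
  case Nil then show ?case by simp
next
  case (snoc z xs)
  show ?case
  proof (cases "xs = []")
    case True then show ?thesis using snoc assms(1) by auto
  next
    case False
    then obtain T1 where T1: "is_tree T1" "T \<subseteq> T1" "T1 \<subseteq> T \<union> path_edges xs" "set xs \<union> \<Union>T \<subseteq> \<Union>T1"
      using snoc by auto
    have sub: "path_edges xs \<subseteq> path_edges (xs @ [z])" by (rule path_edges_snoc)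
    show ?thesis
    proof (cases "z \<in> \<Union>T1")
      case True then show ?thesis using T1 sub by (intro exI[of _ T1]) auto
    next
      case False
      have "last xs \<in> \<Union>T1" using T1(4) \<open>xs \<noteq> []\<close> last_in_set by blast
      from is_tree_insert_leaf[OF T1(1) this False] show ?thesis
        using T1 sub last_edge_in_path_edges[OF \<open>xs \<noteq> []\<close>, of z]
        by (intro exI[of _ "insert {last xs, z} T1"]) auto
    qed
  qed
qed

lemma is_tree_in_path:
  assumes p: "path_between E xs u v" and uv: "u \<noteq> v"
  obtains T where "is_tree T" "T \<subseteq> path_edges xs" "u \<in> \<Union>T" "v \<in> \<Union>T"
proof -
  have ne: "xs \<noteq> []" and d: "distinct xs" and hd: "hd xs = u" and lst: "last xs = v"
    using p by (auto simp: path_between_def is_path_def)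
  have len: "Suc 0 < length xs"
  proof (rule ccontr)
    assume "\<not> ?thesis"
    then have "xs = [u]" using ne hd by (cases xs) auto
    then show False using lst uv by simp
  qed
  have d01: "xs ! 0 \<noteq> xs ! 1"
    using d len by (metis One_nat_def Suc_lessD nth_eq_iff_index_eq zero_neq_one)
  have "{xs ! 0, xs ! Suc 0} \<in> path_edges xs" using len unfolding path_edges_def by blast
  then have T0: "{{xs ! 0, xs ! 1}} \<union> path_edges xs = path_edges xs" by auto
  have "hd xs \<in> \<Union>{{xs ! 0, xs ! 1}}" using ne by (simp add: hd_conv_nth)
  from is_tree_extend_along_path[OF is_tree_edge[OF d01] ne this, unfolded T0]
  obtain T where "is_tree T" "T \<subseteq> path_edges xs" "set xs \<union> \<Union>{{xs ! 0, xs ! 1}} \<subseteq> \<Union>T"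
    by (elim exE conjE)
  moreover have "u \<in> set xs" "v \<in> set xs" using hd lst ne by auto
  ultimately show ?thesis by (intro that) auto
qed

lemma is_tree_image:
  assumes T: "is_tree T" and inj: "inj_on f (\<Union>T)"
  shows "is_tree (image f ` T)"
proof -
  have injT: "inj_on (image f) T"
    by (rule inj_onI) (metis Sup_upper inj inj_on_image_eq_iff)
  have U: "\<Union>(image f ` T) = f ` \<Union>T" by auto
  have "\<exists>ys. path_between (image f ` T) ys (f u) (f v)" if uv: "u \<in> \<Union>T" "v \<in> \<Union>T" for u v
  proof -
    obtain xs where p: "path_between T xs u v" using T uv unfolding is_tree_def by blast
    have sx: "set xs \<subseteq> \<Union>T" using set_path_subset[of T xs] p uv by (auto simp: path_between_def)
    have "is_path (image f ` T) (map f xs)"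
      unfolding is_path_def
    proof (intro conjI allI impI)
      show "map f xs \<noteq> []" using p by (auto simp: path_between_def is_path_def)
      show "distinct (map f xs)" using p inj_on_subset[OF inj sx]
        by (auto simp: path_between_def is_path_def distinct_map)
      fix i assume i: "Suc i < length (map f xs)"
      then have "{xs ! i, xs ! Suc i} \<in> T" using p by (simp add: path_between_def is_path_def)
      moreover have "{map f xs ! i, map f xs ! Suc i} = f ` {xs ! i, xs ! Suc i}" using i by simp
      ultimately show "{map f xs ! i, map f xs ! Suc i} \<in> image f ` T" by (metis imageI)
    qed
    then show ?thesis using p by (auto simp: path_between_def is_path_def hd_map last_map)
  qed
  then show ?thesis unfolding is_tree_def U using T card_image[OF injT] card_image[OF inj]
    by (auto simp: is_tree_def)
qed

lemma finite_edges: "graph V E \<Longrightarrow> finite E"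
  unfolding graph_def by (meson Pow_iff finite_Pow_iff rev_finite_subset subsetI)

section \<open>Rainbow trees and colourings\<close>

definition rainbow_tree :: "('v set \<Rightarrow> nat) \<Rightarrow> 'v set set \<Rightarrow> 'v set set \<Rightarrow> bool" where
  "rainbow_tree c E T \<longleftrightarrow> T \<subseteq> E \<and> is_tree T \<and> inj_on c T"

definition rx3_colouring :: "('v set \<Rightarrow> nat) \<Rightarrow> 'v set \<Rightarrow> 'v set set \<Rightarrow> nat \<Rightarrow> bool" where
  "rx3_colouring c V E k \<longleftrightarrow> (\<forall>e\<in>E. c e < k) \<and>
     (\<forall>S\<subseteq>V. card S = 3 \<longrightarrow> (\<exists>T. rainbow_tree c E T \<and> S \<subseteq> \<Union>T))"

definition rc_colouring :: "('v set \<Rightarrow> nat) \<Rightarrow> 'v set \<Rightarrow> 'v set set \<Rightarrow> nat \<Rightarrow> bool" where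
  "rc_colouring c V E k \<longleftrightarrow> (\<forall>e\<in>E. c e < k) \<and>
     (\<forall>u\<in>V. \<forall>v\<in>V. u \<noteq> v \<longrightarrow> (\<exists>xs. path_between E xs u v \<and> inj_on c (path_edges xs)))"

lemma rx3_eq_Least: "rx3 V E = (LEAST k. \<exists>c. rx3_colouring c V E k)"
  unfolding rx3_def rx3_colouring_def rainbow_tree_def by (simp add: conj_ac)

lemma rx3_le: "rx3_colouring c V E k \<Longrightarrow> rx3 V E \<le> k"
  unfolding rx3_eq_Least by (rule Least_le) blast

lemma rainbow_tree_insert_leaf:
  assumes "rainbow_tree c E T" "x \<in> \<Union>T" "y \<notin> \<Union>T" "{x, y} \<in> E" "c {x, y} \<notin> c ` T"
  shows "rainbow_tree c E (insert {x, y} T)"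
  using assms is_tree_insert_leaf[of T x y] by (auto simp: rainbow_tree_def)

lemma rainbow_tree_in_rainbow_path:
  assumes "path_between E xs u v" "u \<noteq> v" "inj_on c (path_edges xs)"
  obtains T where "rainbow_tree c E T" "u \<in> \<Union>T" "v \<in> \<Union>T"
proof -
  obtain T where T: "is_tree T" "T \<subseteq> path_edges xs" "u \<in> \<Union>T" "v \<in> \<Union>T"
    using is_tree_in_path[OF assms(1,2)] by blast
  have "path_edges xs \<subseteq> E" using assms(1) path_edges_subset by (auto simp: path_between_def)
  then show ?thesis using T inj_on_subset[OF assms(3) T(2)] by (intro that) (auto simp: rainbow_tree_def)
qed

lemma tree_through_three_vertices:
  assumes E: "connected_graph V E" and abd: "a \<in> V" "b \<in> V" "d \<in> V" "a \<noteq> b"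
  obtains T where "T \<subseteq> E" "is_tree T" "{a, b, d} \<subseteq> \<Union>T"
proof -
  obtain xs where xs: "path_between E xs a b" using E abd by (auto simp: connected_graph_def)
  obtain ys where ys: "path_between E ys a d" using E abd by (auto simp: connected_graph_def)
  obtain T0 where T0: "is_tree T0" "T0 \<subseteq> path_edges xs" "a \<in> \<Union>T0" "b \<in> \<Union>T0"
    by (rule is_tree_in_path[OF xs abd(4)])
  have "ys \<noteq> []" "hd ys \<in> \<Union>T0" using ys T0 by (auto simp: path_between_def is_path_def)
  from is_tree_extend_along_path[OF T0(1) this] obtain T where
    T: "is_tree T" "T0 \<subseteq> T" "T \<subseteq> T0 \<union> path_edges ys" "set ys \<union> \<Union>T0 \<subseteq> \<Union>T"
    by (elim exE conjE)
  have "path_edges xs \<subseteq> E" "path_edges ys \<subseteq> E"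
    using xs ys path_edges_subset by (auto simp: path_between_def)
  then have "T \<subseteq> E" using T T0 by blast
  moreover have "d \<in> set ys" using ys by (auto simp: path_between_def is_path_def)
  then have "{a, b, d} \<subseteq> \<Union>T" using T T0 by auto
  ultimately show ?thesis using T(1) by (intro that)
qed

text \<open>An injective colouring is both an rc- and an rx3-colouring, so the minima defining
  rc and rx3 are attained.\<close>

lemma injective_colouring:
  assumes "connected_graph V E"
  obtains c :: "'v set \<Rightarrow> nat" and n where "rc_colouring c V E n" "rx3_colouring c V E n"
proof -
  have "finite E" using assms by (auto simp: connected_graph_def intro: finite_edges)
  then obtain c :: "'v set \<Rightarrow> nat" and n where c: "c ` E = {..<n}" "inj_on c E"
    using finite_imp_inj_to_nat_seg[of E] by (auto simp: lessThan_def)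
  have "rc_colouring c V E n"
    unfolding rc_colouring_def
  proof (intro conjI ballI impI)
    show "c e < n" if "e \<in> E" for e using c that by auto
    fix u v assume "u \<in> V" "v \<in> V" "u \<noteq> v"
    then obtain xs where xs: "path_between E xs u v" using assms by (auto simp: connected_graph_def)
    then have "path_edges xs \<subseteq> E" using path_edges_subset by (auto simp: path_between_def)
    then show "\<exists>xs. path_between E xs u v \<and> inj_on c (path_edges xs)"
      using xs inj_on_subset[OF c(2)] by blast
  qed
  moreover have "rx3_colouring c V E n"
    unfolding rx3_colouring_def
  proof (intro conjI allI impI)
    show "\<forall>e\<in>E. c e < n" using c by auto
    fix S assume "S \<subseteq> V" "card S = 3"
    then obtain a b d where S: "S = {a, b, d}" and abd: "a \<in> V" "b \<in> V" "d \<in> V" "a \<noteq> b"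
      by (auto simp: card_3_iff)
    obtain T where "T \<subseteq> E" "is_tree T" "{a, b, d} \<subseteq> \<Union>T"
      by (rule tree_through_three_vertices[OF assms abd])
    with S show "\<exists>T. rainbow_tree c E T \<and> S \<subseteq> \<Union>T"
      using inj_on_subset[OF c(2)] by (auto simp: rainbow_tree_def)
  qed
  ultimately show ?thesis by (rule that)
qed

lemma rx3_colouring_rx3:
  assumes "connected_graph V E"
  obtains c where "rx3_colouring c V E (rx3 V E)"
proof -
  obtain c n where "rx3_colouring c V E n" using injective_colouring[OF assms] by blast
  then have "\<exists>n c. rx3_colouring c V E n" by blast
  then have "\<exists>c. rx3_colouring c V E (LEAST k. \<exists>c. rx3_colouring c V E k)" by (rule LeastI_ex)
  then show ?thesis using that by (auto simp flip: rx3_eq_Least)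
qed

lemma rc_colouring_rc:
  assumes "connected_graph V E"
  obtains c where "rc_colouring c V E (rc V E)"
proof -
  obtain c n where "rc_colouring c V E n" using injective_colouring[OF assms] by blast
  then have "\<exists>n c. rc_colouring c V E n" by blast
  then have "\<exists>c. rc_colouring c V E (LEAST k. \<exists>c. rc_colouring c V E k)" by (rule LeastI_ex)
  moreover have "rc V E = (LEAST k. \<exists>c. rc_colouring c V E k)" unfolding rc_def rc_colouring_def ..
  ultimately show ?thesis by (elim exE) (rule that, simp)
qed

lemma rainbow_tree_image:
  assumes "inj_on f (\<Union>T)" "rainbow_tree c0 E0 T"
    and "\<And>e. e \<in> E0 \<Longrightarrow> f ` e \<in> E \<and> c (f ` e) = c0 e"
  shows "rainbow_tree c E (image f ` T)"
proof -
  have "inj_on (c \<circ> image f) T"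
  proof (rule inj_onI)
    fix e1 e2 assume e: "e1 \<in> T" "e2 \<in> T" "(c \<circ> image f) e1 = (c \<circ> image f) e2"
    moreover have "e1 \<in> E0" "e2 \<in> E0" using e assms(2) by (auto simp: rainbow_tree_def)
    ultimately have "c0 e1 = c0 e2" using assms(3)[of e1] assms(3)[of e2] by simp
    then show "e1 = e2" using assms(2) e(1,2) by (auto simp: rainbow_tree_def inj_on_eq_iff)
  qed
  then have "inj_on c (image f ` T)" by (rule inj_on_imageI)
  then show ?thesis using assms is_tree_image[of T f] by (auto simp: rainbow_tree_def)
qed

lemma rx3_colouring_image:
  assumes c1: "rx3_colouring c1 V1 E1 k" and k: "0 < k" and sub: "\<forall>e\<in>E1. e \<subseteq> V1"
    and inj: "inj_on \<phi> V1" and im: "\<phi> ` V1 = V2" and edges: "\<forall>e\<in>E1. \<phi> ` e \<in> E2"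
  obtains c2 where "rx3_colouring c2 V2 E2 k"
proof -
  define \<psi> where "\<psi> = inv_into V1 \<phi>"
  \<comment> \<open>Edges outside the image of E1 lie in no tree we use; colour 0 is why 0 < k is needed.\<close>
  define c2 where "c2 e = (if \<psi> ` e \<in> E1 then c1 (\<psi> ` e) else 0)" for e
  have "\<psi> ` \<phi> ` e = e" if "e \<subseteq> V1" for e
    using that inj unfolding \<psi>_def by (auto simp: image_image inv_into_f_f subset_iff)
  then have c2_image: "c2 (\<phi> ` e) = c1 e" if "e \<in> E1" for e using that sub unfolding c2_def by auto
  have "rx3_colouring c2 V2 E2 k" unfolding rx3_colouring_def
  proof (intro conjI allI impI ballI)
    fix e assume "e \<in> E2" then show "c2 e < k" using c1 k unfolding c2_def rx3_colouring_def by auto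
  next
    fix S assume S: "S \<subseteq> V2" "card S = 3"
    have "inj_on \<psi> V2" unfolding \<psi>_def using im inj_on_inv_into by blast
    then have "card (\<psi> ` S) = 3" using card_image[OF inj_on_subset[OF _ S(1)]] S by simp
    moreover have "\<psi> ` S \<subseteq> V1" using S(1) im unfolding \<psi>_def by (auto intro: inv_into_into)
    ultimately obtain T where T: "rainbow_tree c1 E1 T" "\<psi> ` S \<subseteq> \<Union>T"
      using c1 unfolding rx3_colouring_def by blast
    have "\<Union>T \<subseteq> V1" using T(1) sub by (auto simp: rainbow_tree_def)
    then have "rainbow_tree c2 E2 (image \<phi> ` T)"
      using T(1) edges c2_image by (intro rainbow_tree_image[OF inj_on_subset[OF inj]]) auto
    moreover have "S \<subseteq> \<Union>(image \<phi> ` T)"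
    proof
      fix x assume "x \<in> S"
      then have "\<psi> x \<in> \<Union>T" "\<phi> (\<psi> x) = x" using T(2) S(1) im unfolding \<psi>_def
        by (auto intro: f_inv_into_f)
      then show "x \<in> \<Union>(image \<phi> ` T)" by (metis UnionE UnionI imageI)
    qed
    ultimately show "\<exists>T. rainbow_tree c2 E2 T \<and> S \<subseteq> \<Union>T" by blast
  qed
  then show ?thesis by (rule that)
qed

section \<open>Two colours do not suffice\<close>

lemma two_subset_of_three:
  assumes "e \<subseteq> {a, b, d}" "card e = 2"
  shows "e = {a, b} \<or> e = {a, d} \<or> e = {b, d}"
proof -
  obtain x y where "e = {x, y}" "x \<noteq> y" using assms(2) by (meson card_2_iff)
  then show ?thesis using assms(1) by (simp add: insert_commute) blast
qed

text \<open>With at most two colours a rainbow tree has at most two edges, so a rainbow tree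
  through three vertices consists of two of the three pairs among them.\<close>

lemma rainbow_tree_two_colours:
  assumes c: "rx3_colouring c V E k" and k: "k \<le> 2" and E: "\<forall>e\<in>E. card e = 2"
    and abd: "a \<in> V" "b \<in> V" "d \<in> V" "a \<noteq> b" "b \<noteq> d" "a \<noteq> d"
  shows "({a,b} \<in> E \<and> {a,d} \<in> E \<and> c {a,b} \<noteq> c {a,d})
     \<or> ({a,b} \<in> E \<and> {b,d} \<in> E \<and> c {a,b} \<noteq> c {b,d})
     \<or> ({a,d} \<in> E \<and> {b,d} \<in> E \<and> c {a,d} \<noteq> c {b,d})"
proof -
  have S: "{a, b, d} \<subseteq> V" "card {a, b, d} = 3" using abd by auto
  then obtain T where T: "T \<subseteq> E" "is_tree T" "{a, b, d} \<subseteq> \<Union>T" "inj_on c T"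
    using c unfolding rx3_colouring_def rainbow_tree_def by blast
  have "c ` T \<subseteq> {..<k}" using c T(1) unfolding rx3_colouring_def by auto
  then have "card (c ` T) \<le> k" by (metis card_lessThan card_mono finite_lessThan)
  then have "card T \<le> 2" using card_image[OF T(4)] k by simp
  have fU: "finite (\<Union>T)" using finite_Union_tree[OF T(2)] .
  have "card (\<Union>T) \<le> 3" using T(2) \<open>card T \<le> 2\<close> by (simp add: is_tree_def)
  moreover have "card {a, b, d} \<le> card (\<Union>T)" by (rule card_mono[OF fU T(3)])
  ultimately have "card {a, b, d} = card (\<Union>T)" using S(2) by linarith
  then have U: "\<Union>T = {a, b, d}" using card_subset_eq[OF fU T(3)] by simp
  then have "card T = 2" using T(2) S by (simp add: is_tree_def)
  then obtain e1 e2 where e: "T = {e1, e2}" "e1 \<noteq> e2" by (meson card_2_iff)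
  have "e1 = {a, b} \<or> e1 = {a, d} \<or> e1 = {b, d}"
    using U e E T(1) by (intro two_subset_of_three) auto
  moreover have "e2 = {a, b} \<or> e2 = {a, d} \<or> e2 = {b, d}"
    using U e E T(1) by (intro two_subset_of_three) auto
  moreover have "c e1 \<noteq> c e2" "e1 \<in> E" "e2 \<in> E" using T(1,4) e by auto
  ultimately show ?thesis using e(2) by (auto simp: insert_commute)
qed

text \<open>Two colours fail: every third vertex w is joined to both ends of the non-edge uv by
  differently coloured edges, so two of three such vertices p, q see u in the same colour
  and then also v; no rainbow tree can then span u, p, q and v, p, q at once.\<close>

lemma three_le_colours:
  assumes c: "rx3_colouring c V E k" and E: "\<forall>e\<in>E. card e = 2"
    and V: "finite V" "5 \<le> card V" and uv: "u \<in> V" "v \<in> V" "u \<noteq> v" "{u, v} \<notin> E"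
  shows "3 \<le> k"
proof (rule ccontr)
  assume "\<not> 3 \<le> k" then have k: "k \<le> 2" by simp
  have bd: "c e < 2" if "e \<in> E" for e using c k that unfolding rx3_colouring_def by fastforce
  note two = rainbow_tree_two_colours[OF c k E]
  have uvw: "{u,w} \<in> E \<and> {v,w} \<in> E \<and> c {u,w} \<noteq> c {v,w}" if "w \<in> V" "w \<noteq> u" "w \<noteq> v" for w
    using two[of u v w] uv that by blast
  have same_colour_impossible: False if pq: "p \<in> V" "q \<in> V" "p \<noteq> u" "p \<noteq> v" "q \<noteq> u" "q \<noteq> v" "p \<noteq> q"
    and eq: "c {u,p} = c {u,q}" for p q
  proof -
    have hp: "{u,p} \<in> E" "{v,p} \<in> E" "c {u,p} \<noteq> c {v,p}" using uvw[of p] pq by auto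
    have hq: "{u,q} \<in> E" "{v,q} \<in> E" "c {u,q} \<noteq> c {v,q}" using uvw[of q] pq by auto
    have "c {u,p} < 2" "c {v,p} < 2" "c {u,q} < 2" "c {v,q} < 2" using bd hp hq by auto
    then have eqv: "c {v,p} = c {v,q}" using hp(3) hq(3) eq by linarith
    have "{p,q} \<in> E \<and> c {p,q} \<noteq> c {u,p}"
      using two[of u p q] uv pq eq by (auto simp: insert_commute)
    moreover have "c {p,q} \<noteq> c {v,p}"
      using two[of v p q] uv pq eqv by (auto simp: insert_commute)
    ultimately show False using bd \<open>c {u,p} < 2\<close> \<open>c {v,p} < 2\<close> hp(3) by fastforce
  qed
  have "3 \<le> card (V - {u, v})" using V uv by (simp add: card_Diff_subset)
  then obtain S where "S \<subseteq> V - {u, v}" "card S = 3" by (meson obtain_subset_with_card_n)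
  then obtain x y z where xyz: "x \<in> V" "y \<in> V" "z \<in> V" "x \<notin> {u, v}" "y \<notin> {u, v}" "z \<notin> {u, v}"
    "x \<noteq> y" "y \<noteq> z" "x \<noteq> z"
    by (auto simp: card_3_iff)
  have "c {u,x} < 2" "c {u,y} < 2" "c {u,z} < 2" using bd uvw xyz by auto
  then have "c {u,x} = c {u,y} \<or> c {u,x} = c {u,z} \<or> c {u,y} = c {u,z}" by linarith
  then show False using same_colour_impossible xyz by blast
qed

lemma three_le_rx3:
  assumes "connected_graph V E" "5 \<le> card V" "u \<in> V" "v \<in> V" "u \<noteq> v" "{u, v} \<notin> E"
  shows "3 \<le> rx3 V E"
proof -
  obtain c where "rx3_colouring c V E (rx3 V E)" using rx3_colouring_rx3[OF assms(1)] .
  then show ?thesis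
    using assms by (intro three_le_colours) (auto simp: connected_graph_def graph_def)
qed

section \<open>Joins\<close>

lemma join_V_eq_Plus: "join_V VG VH = VG <+> VH"
  by (simp add: join_V_def Plus_def)

lemma card_join_V: "finite VG \<Longrightarrow> finite VH \<Longrightarrow> card (join_V VG VH) = card VG + card VH"
  by (simp add: join_V_eq_Plus card_Plus)

lemma cross_edge_in_join_E [simp]:
  "u \<in> VG \<Longrightarrow> v \<in> VH \<Longrightarrow> {Inl u, Inr v} \<in> join_E VG EG VH EH"
  unfolding join_E_def by blast

lemma cross_edge_in_join_E' [simp]:
  "u \<in> VG \<Longrightarrow> v \<in> VH \<Longrightarrow> {Inr v, Inl u} \<in> join_E VG EG VH EH"
  by (subst insert_commute) (rule cross_edge_in_join_E)

lemma Inl_image_in_join_E: "e \<in> EG \<Longrightarrow> Inl ` e \<in> join_E VG EG VH EH"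
  unfolding join_E_def by blast

lemma Inr_image_in_join_E: "e \<in> EH \<Longrightarrow> Inr ` e \<in> join_E VG EG VH EH"
  unfolding join_E_def by blast

lemma join_E_cases:
  assumes "e \<in> join_E VG EG VH EH"
  obtains (G) a where "a \<in> EG" "e = Inl ` a" | (H) a where "a \<in> EH" "e = Inr ` a"
    | (cross) u v where "u \<in> VG" "v \<in> VH" "e = {Inl u, Inr v}"
  using assms unfolding join_E_def by (elim UnE CollectE exE conjE imageE) auto

lemma Inl_pair_in_join_E_iff: "{Inl u, Inl v} \<in> join_E VG EG VH EH \<longleftrightarrow> {u, v} \<in> EG"
proof
  assume "{Inl u, Inl v} \<in> join_E VG EG VH EH"
  then show "{u, v} \<in> EG"
  proof (cases rule: join_E_cases)
    case (G a)
    have "{u, v} = a" using arg_cong[OF G(2), of "vimage Inl"] by auto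
    then show ?thesis using G(1) by simp
  next
    case (H a)
    then have "Inl u \<in> Inr ` a" by (metis insertI1)
    then show ?thesis by auto
  next
    case (cross x y)
    then show ?thesis by (simp add: doubleton_eq_iff)
  qed
next
  assume "{u, v} \<in> EG"
  then have "Inl ` {u, v} \<in> join_E VG EG VH EH" by (rule Inl_image_in_join_E)
  then show "{Inl u, Inl v} \<in> join_E VG EG VH EH" by simp
qed

lemma Inr_pair_in_join_E_iff: "{Inr u, Inr v} \<in> join_E VG EG VH EH \<longleftrightarrow> {u, v} \<in> EH"
proof
  assume "{Inr u, Inr v} \<in> join_E VG EG VH EH"
  then show "{u, v} \<in> EH"
  proof (cases rule: join_E_cases)
    case (H a)
    have "{u, v} = a" using arg_cong[OF H(2), of "vimage Inr"] by auto
    then show ?thesis using H(1) by simp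
  next
    case (G a)
    then have "Inr u \<in> Inl ` a" by (metis insertI1)
    then show ?thesis by auto
  next
    case (cross x y)
    then show ?thesis by (simp add: doubleton_eq_iff)
  qed
next
  assume "{u, v} \<in> EH"
  then have "Inr ` {u, v} \<in> join_E VG EG VH EH" by (rule Inr_image_in_join_E)
  then show "{Inr u, Inr v} \<in> join_E VG EG VH EH" by simp
qed

lemma graph_join:
  assumes "graph VG EG" "graph VH EH"
  shows "graph (join_V VG VH) (join_E VG EG VH EH)"
proof -
  have "e \<subseteq> join_V VG VH \<and> card e = 2" if "e \<in> join_E VG EG VH EH" for e
    using that
  proof (cases rule: join_E_cases)
    case (G a)
    then have "a \<subseteq> VG" "card a = 2" using assms(1) by (auto simp: graph_def)
    then show ?thesis using G by (auto simp: join_V_def card_image)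
  next
    case (H a)
    then have "a \<subseteq> VH" "card a = 2" using assms(2) by (auto simp: graph_def)
    then show ?thesis using H by (auto simp: join_V_def card_image)
  next
    case (cross u v) then show ?thesis by (simp add: join_V_def)
  qed
  moreover have "finite (join_V VG VH)" using assms by (simp add: graph_def join_V_def)
  ultimately show ?thesis by (simp add: graph_def)
qed

lemma connected_join:
  assumes G: "graph VG EG" "g \<in> VG" and H: "graph VH EH" "h \<in> VH"
  shows "connected_graph (join_V VG VH) (join_E VG EG VH EH)"
  unfolding connected_graph_def
proof (intro conjI ballI)
  show "graph (join_V VG VH) (join_E VG EG VH EH)" using graph_join[OF G(1) H(1)] .
  show "join_V VG VH \<noteq> {}" using G by (auto simp: join_V_def)
  fix x y assume x: "x \<in> join_V VG VH" and y: "y \<in> join_V VG VH"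
  show "\<exists>xs. path_between (join_E VG EG VH EH) xs x y"
  proof (cases "x = y")
    case True then show ?thesis by (intro exI[of _ "[x]"]) (simp add: path_between_def is_path_def)
  next
    case False
    then consider (GG) u u' where "u \<in> VG" "u' \<in> VG" "x = Inl u" "y = Inl u'"
      | (GH) u v where "u \<in> VG" "v \<in> VH" "x = Inl u" "y = Inr v"
      | (HG) u v where "u \<in> VG" "v \<in> VH" "x = Inr v" "y = Inl u"
      | (HH) v v' where "v \<in> VH" "v' \<in> VH" "x = Inr v" "y = Inr v'"
      using x y unfolding join_V_def by blast
    then show ?thesis
    proof cases
      case GG then show ?thesis
        using False H(2) by (intro exI[of _ "[x, Inr h, y]"] path_between_three) auto
    next
      case GH then show ?thesis by (intro exI[of _ "[x, y]"] path_between_two) auto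
    next
      case HG then show ?thesis by (intro exI[of _ "[x, y]"] path_between_two) auto
    next
      case HH then show ?thesis
        using False G(2) by (intro exI[of _ "[x, Inl g, y]"] path_between_three) auto
    qed
  qed
qed

lemma join_triple_cases:
  assumes S: "S \<subseteq> join_V VG VH" "card S = 3"
  obtains (GGG) a b d where "a \<in> VG" "b \<in> VG" "d \<in> VG" "a \<noteq> b" "b \<noteq> d" "a \<noteq> d"
      "S = {Inl a, Inl b, Inl d}"
    | (GGH) a b x where "a \<in> VG" "b \<in> VG" "x \<in> VH" "a \<noteq> b" "S = {Inl a, Inl b, Inr x}"
    | (GHH) a x y where "a \<in> VG" "x \<in> VH" "y \<in> VH" "x \<noteq> y" "S = {Inl a, Inr x, Inr y}"
    | (HHH) x y z where "x \<in> VH" "y \<in> VH" "z \<in> VH" "x \<noteq> y" "y \<noteq> z" "x \<noteq> z"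
      "S = {Inr x, Inr y, Inr z}"
proof -
  define A where "A = Inl -` S"
  define B where "B = Inr -` S"
  have SAB: "S = Inl ` A \<union> Inr ` B" using S(1) by (auto simp: A_def B_def join_V_def)
  have "finite S" using S(2) by (metis card.infinite zero_neq_numeral)
  then have fin: "finite A" "finite B" unfolding A_def B_def by (auto intro: finite_vimageI)
  have AB: "A \<subseteq> VG" "B \<subseteq> VH" using S(1) unfolding A_def B_def join_V_def by auto
  have "card A + card B = 3" using S(2) fin by (simp add: SAB card_Plus flip: Plus_def)
  then consider "card A = 3" "card B = 0" | "card A = 2" "card B = 1" | "card A = 1" "card B = 2"
    | "card A = 0" "card B = 3"
    by linarith
  then show ?thesis
  proof cases
    case 1
    then obtain a b d where "A = {a, b, d}" "a \<noteq> b" "b \<noteq> d" "a \<noteq> d" by (auto simp: card_3_iff)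
    then show ?thesis using 1 SAB AB fin by (intro that(1)[of a b d]) auto
  next
    case 2
    then obtain a b x where "A = {a, b}" "a \<noteq> b" "B = {x}"
      by (auto simp: card_2_iff card_1_singleton_iff)
    then show ?thesis using SAB AB by (intro that(2)[of a b x]) auto
  next
    case 3
    then obtain a x y where "A = {a}" "B = {x, y}" "x \<noteq> y"
      by (auto simp: card_2_iff card_1_singleton_iff)
    then show ?thesis using SAB AB by (intro that(3)[of a x y]) auto
  next
    case 4
    then obtain x y z where "B = {x, y, z}" "x \<noteq> y" "y \<noteq> z" "x \<noteq> z" by (auto simp: card_3_iff)
    then show ?thesis using 4 SAB AB fin by (intro that(4)[of x y z]) auto
  qed
qed

lemma Kbip_V_eq_join: "Kbip_V s t = join_V {..<s} {..<t}"
  by (simp add: Kbip_V_def join_V_def lessThan_atLeast0)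

lemma Kbip_E_eq_join: "Kbip_E s t = join_E {..<s} {} {..<t} {}"
  by (auto simp: Kbip_E_def join_E_def)

section \<open>Colourings of joins\<close>

lemma rx3_colouring_mono: "rx3_colouring c V E k \<Longrightarrow> k \<le> k' \<Longrightarrow> rx3_colouring c V E k'"
  unfolding rx3_colouring_def by fastforce

lemma lifted_rainbow_tree:
  assumes f: "inj f" and c0: "rx3_colouring c0 V0 E0 k"
    and lift: "\<And>e. e \<in> E0 \<Longrightarrow> f ` e \<in> E \<and> c (f ` e) = c0 e"
    and S: "S \<subseteq> V0" "card S = 3"
  obtains T where "rainbow_tree c E T" "f ` S \<subseteq> \<Union>T" "\<Union>T \<subseteq> range f" "c ` T \<subseteq> {..<k}"
proof -
  obtain T0 where T0: "rainbow_tree c0 E0 T0" "S \<subseteq> \<Union>T0"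
    using c0 S unfolding rx3_colouring_def by blast
  have "rainbow_tree c E (image f ` T0)"
    using T0(1) lift by (intro rainbow_tree_image[OF inj_on_subset[OF f subset_UNIV]])
  moreover have "c ` image f ` T0 \<subseteq> {..<k}"
    using T0(1) lift c0 unfolding rainbow_tree_def rx3_colouring_def by fastforce
  moreover have "f ` S \<subseteq> \<Union>(image f ` T0)" using T0(2) by blast
  ultimately show ?thesis by (intro that) auto
qed

lemma lifted_rainbow_tree_with_leaf:
  assumes f: "inj f" and c0: "rx3_colouring c0 V0 E0 k"
    and lift: "\<And>e. e \<in> E0 \<Longrightarrow> f ` e \<in> E \<and> c (f ` e) = c0 e"
    and V0: "finite V0" "3 \<le> card V0" and xy: "x \<in> V0" "y \<in> V0" "x \<noteq> y"
    and w: "{f x, w} \<in> E" "w \<notin> range f" "k \<le> c {f x, w}"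
  obtains T where "rainbow_tree c E T" "{f x, f y, w} \<subseteq> \<Union>T"
proof -
  have "\<not> V0 \<subseteq> {x, y}" using V0 xy card_mono[of "{x, y}" V0] by auto
  then obtain z where z: "z \<in> V0" "z \<noteq> x" "z \<noteq> y" by blast
  have "{x, y, z} \<subseteq> V0" "card {x, y, z} = 3" using xy z by auto
  from lifted_rainbow_tree[OF f c0 lift this] obtain T where
    T: "rainbow_tree c E T" "f ` {x, y, z} \<subseteq> \<Union>T" "\<Union>T \<subseteq> range f" "c ` T \<subseteq> {..<k}" .
  have "rainbow_tree c E (insert {f x, w} T)"
    by (rule rainbow_tree_insert_leaf[OF T(1)]) (use T w in auto)
  then show ?thesis using T(2) by (intro that) auto
qed

definition join_colouring :: "('a set \<Rightarrow> nat) \<Rightarrow> ('b set \<Rightarrow> nat) \<Rightarrow> nat \<Rightarrow> ('a + 'b) set \<Rightarrow> nat"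
  where "join_colouring cG cH m e =
    (if e \<subseteq> range Inr then cH (Inr -` e) else if e \<subseteq> range Inl then cG (Inl -` e) else m)"

lemma join_colouring_Inl: "e \<noteq> {} \<Longrightarrow> join_colouring cG cH m (Inl ` e) = cG e"
  by (auto simp: join_colouring_def inj_vimage_image_eq)

lemma join_colouring_Inr: "join_colouring cG cH m (Inr ` e) = cH e"
  by (auto simp: join_colouring_def inj_vimage_image_eq)

lemma join_colouring_cross [simp]:
  "join_colouring cG cH m {Inl u, Inr v} = m" "join_colouring cG cH m {Inr v, Inl u} = m"
  by (auto simp: join_colouring_def)

text \<open>A side containing two vertices of a triple must offer a third vertex for a rainbow
  tree of that side; this is what the hypotheses card \<noteq> 2 provide.\<close>

lemma rx3_colouring_join:
  assumes colG: "rx3_colouring cG VG EG m" and colH: "rx3_colouring cH VH EH m"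
    and G: "graph VG EG" "card VG \<noteq> 2" and H: "graph VH EH" "card VH \<noteq> 2"
  shows "rx3_colouring (join_colouring cG cH m) (join_V VG VH) (join_E VG EG VH EH) (m + 1)"
    (is "rx3_colouring ?c _ ?E _")
proof -
  have liftG: "Inl ` e \<in> ?E \<and> ?c (Inl ` e) = cG e" if "e \<in> EG" for e
  proof -
    have "e \<noteq> {}" using G(1) that by (fastforce simp: graph_def)
    then show ?thesis using that by (simp add: join_colouring_Inl Inl_image_in_join_E)
  qed
  have liftH: "Inr ` e \<in> ?E \<and> ?c (Inr ` e) = cH e" if "e \<in> EH" for e
    using that by (simp add: join_colouring_Inr Inr_image_in_join_E)
  have card3: "finite V \<and> 3 \<le> card V" if "graph V E" "card V \<noteq> 2" "a \<in> V" "b \<in> V" "a \<noteq> b"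
    for V :: "'v set" and E a b
    using that card_mono[of V "{a, b}"] by (fastforce simp: graph_def)
  show ?thesis
    unfolding rx3_colouring_def
  proof (intro conjI allI impI ballI)
    fix e assume "e \<in> ?E"
    then show "?c e < m + 1"
      by (cases rule: join_E_cases) (use liftG liftH colG colH in \<open>auto simp: rx3_colouring_def\<close>)
  next
    fix S assume "S \<subseteq> join_V VG VH" "card S = 3"
    then show "\<exists>T. rainbow_tree ?c ?E T \<and> S \<subseteq> \<Union>T"
    proof (cases rule: join_triple_cases)
      case (GGG a b d)
      then have S: "{a, b, d} \<subseteq> VG" "card {a, b, d} = 3" by auto
      show ?thesis by (rule lifted_rainbow_tree[OF inj_Inl colG liftG S]) (use GGG(7) in auto)
    next
      case (GGH a b x)
      then have VG: "finite VG" "3 \<le> card VG" using card3[OF G] by auto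
      show ?thesis
        by (rule lifted_rainbow_tree_with_leaf[OF inj_Inl colG liftG VG GGH(1,2,4), of "Inr x"])
          (use GGH in auto)
    next
      case (GHH a x y)
      then have VH: "finite VH" "3 \<le> card VH" using card3[OF H] by auto
      show ?thesis
        by (rule lifted_rainbow_tree_with_leaf[OF inj_Inr colH liftH VH GHH(2-4), of "Inl a"])
          (use GHH in auto)
    next
      case (HHH x y z)
      then have S: "{x, y, z} \<subseteq> VH" "card {x, y, z} = 3" by auto
      show ?thesis by (rule lifted_rainbow_tree[OF inj_Inr colH liftH S]) (use HHH(7) in auto)
    qed
  qed
qed

lemma rx3_join_le_max_plus_one:
  assumes "connected_graph VG EG" "connected_graph VH EH" "card VG \<noteq> 2" "card VH \<noteq> 2"
  shows "rx3 (join_V VG VH) (join_E VG EG VH EH) \<le> max (rx3 VG EG) (rx3 VH EH) + 1"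
proof -
  obtain cG where "rx3_colouring cG VG EG (rx3 VG EG)" by (rule rx3_colouring_rx3[OF assms(1)])
  then have colG: "rx3_colouring cG VG EG (max (rx3 VG EG) (rx3 VH EH))"
    by (rule rx3_colouring_mono) simp
  obtain cH where "rx3_colouring cH VH EH (rx3 VH EH)" by (rule rx3_colouring_rx3[OF assms(2)])
  then have colH: "rx3_colouring cH VH EH (max (rx3 VG EG) (rx3 VH EH))"
    by (rule rx3_colouring_mono) simp
  show ?thesis
    using assms by (intro rx3_le[OF rx3_colouring_join[OF colG colH]]) (auto simp: connected_graph_def)
qed

lemma rainbow_tree_edge: "x \<noteq> y \<Longrightarrow> {x, y} \<in> E \<Longrightarrow> rainbow_tree c E {{x, y}}"
  by (simp add: rainbow_tree_def is_tree_edge)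

lemma edge_of_connected_two_vertices:
  assumes "connected_graph V E" "V = {a, b}" "a \<noteq> b"
  shows "{a, b} \<in> E"
proof -
  obtain xs where xs: "path_between E xs a b" using assms by (auto simp: connected_graph_def)
  then obtain T where T: "is_tree T" "T \<subseteq> path_edges xs" by (rule is_tree_in_path[OF _ assms(3)])
  obtain e where "e \<in> T" using T(1) by (auto simp: is_tree_def)
  moreover have "path_edges xs \<subseteq> E" using xs path_edges_subset by (auto simp: path_between_def)
  ultimately have "e \<in> E" using T(2) by blast
  then have "e \<subseteq> {a, b}" "card e = 2" using assms(1,2) by (auto simp: connected_graph_def graph_def)
  then have "e = {a, b}" using card_subset_eq[of "{a, b}" e] assms(3) by simp
  then show ?thesis using \<open>e \<in> E\<close> by simp
qed

lemma lifted_rainbow_path_tree: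
  assumes f: "inj f" and c0: "rc_colouring c0 V0 E0 k"
    and lift: "\<And>e. e \<in> E0 \<Longrightarrow> f ` e \<in> E \<and> c (f ` e) = c0 e"
    and xy: "x \<in> V0" "y \<in> V0" "x \<noteq> y"
  obtains T where "rainbow_tree c E T" "f x \<in> \<Union>T" "f y \<in> \<Union>T" "\<Union>T \<subseteq> range f"
    "c ` T \<subseteq> {..<k}"
proof -
  obtain xs where xs: "path_between E0 xs x y" "inj_on c0 (path_edges xs)"
    using c0 xy unfolding rc_colouring_def by blast
  obtain T0 where T0: "rainbow_tree c0 E0 T0" "x \<in> \<Union>T0" "y \<in> \<Union>T0"
    by (rule rainbow_tree_in_rainbow_path[OF xs(1) xy(3) xs(2)])
  have "rainbow_tree c E (image f ` T0)"
    using T0(1) lift by (intro rainbow_tree_image[OF inj_on_subset[OF f subset_UNIV]])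
  moreover have "c ` image f ` T0 \<subseteq> {..<k}"
    using T0(1) lift c0 unfolding rainbow_tree_def rc_colouring_def by fastforce
  moreover have "f x \<in> \<Union>(image f ` T0)" "f y \<in> \<Union>(image f ` T0)" using T0(2,3) by blast+
  ultimately show ?thesis by (intro that) auto
qed

lemma rainbow_tree_insert_path3:
  assumes T: "rainbow_tree c E T" "x \<in> \<Union>T" and new: "p \<notin> \<Union>T" "q \<notin> \<Union>T" "z \<notin> \<Union>T"
    "distinct [x, p, q, z]"
    and edges: "{x, p} \<in> E" "{p, q} \<in> E" "{q, z} \<in> E"
    and colours: "distinct [c {x, p}, c {p, q}, c {q, z}]"
      "c {x, p} \<notin> c ` T" "c {p, q} \<notin> c ` T" "c {q, z} \<notin> c ` T"
  shows "rainbow_tree c E (insert {q, z} (insert {p, q} (insert {x, p} T)))"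
proof -
  have "rainbow_tree c E (insert {x, p} T)"
    using T new edges colours by (intro rainbow_tree_insert_leaf) auto
  then have "rainbow_tree c E (insert {p, q} (insert {x, p} T))"
    by (rule rainbow_tree_insert_leaf) (use new edges colours in auto)
  then show ?thesis by (rule rainbow_tree_insert_leaf) (use new edges colours in auto)
qed

definition two_vertex_join_colouring ::
    "'a \<Rightarrow> ('b set \<Rightarrow> nat) \<Rightarrow> nat \<Rightarrow> ('a + 'b) set \<Rightarrow> nat" where
  "two_vertex_join_colouring g1 cH r e =
    (if e \<subseteq> range Inr then cH (Inr -` e) else if e \<subseteq> range Inl then r + 2
     else if Inl g1 \<in> e then r else r + 1)"

lemma two_vertex_join_colouring_Inr: "two_vertex_join_colouring g1 cH r (Inr ` e) = cH e"
  by (auto simp: two_vertex_join_colouring_def inj_vimage_image_eq)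

lemma two_vertex_join_colouring_Inl: "e \<noteq> {} \<Longrightarrow> two_vertex_join_colouring g1 cH r (Inl ` e) = r + 2"
  by (auto simp: two_vertex_join_colouring_def)

lemma two_vertex_join_colouring_cross [simp]:
  "two_vertex_join_colouring g1 cH r {Inr x, Inl a} = (if a = g1 then r else r + 1)"
  "two_vertex_join_colouring g1 cH r {Inl a, Inr x} = (if a = g1 then r else r + 1)"
  by (auto simp: two_vertex_join_colouring_def)

text \<open>A third vertex z of H off a rainbow path from x to y of H is reached through the path
  x, g2, g1, z, whose three colours are new.\<close>

lemma rx3_colouring_two_vertex_join:
  assumes G: "VG = {g1, g2}" "g1 \<noteq> g2" "{g1, g2} \<in> EG" "\<forall>e\<in>EG. e \<noteq> {}"
    and colH: "rc_colouring cH VH EH r"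
  shows "rx3_colouring (two_vertex_join_colouring g1 cH r) (join_V VG VH) (join_E VG EG VH EH) (r + 3)"
    (is "rx3_colouring ?c _ ?E _")
proof -
  have lift: "Inr ` e \<in> ?E \<and> ?c (Inr ` e) = cH e" if "e \<in> EH" for e
    using that by (simp add: two_vertex_join_colouring_Inr Inr_image_in_join_E)
  have g21: "{Inl g2, Inl g1} \<in> ?E" "?c {Inl g2, Inl g1} = r + 2"
    using G(3) two_vertex_join_colouring_Inl[of "{g2, g1}"]
    by (auto simp: Inl_pair_in_join_E_iff insert_commute)
  show ?thesis
    unfolding rx3_colouring_def
  proof (intro conjI allI impI ballI)
    fix e assume "e \<in> ?E"
    then show "?c e < r + 3"
    proof (cases rule: join_E_cases)
      case (G a) then show ?thesis using assms(4) by (simp add: two_vertex_join_colouring_Inl)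
    next
      case (H a) then show ?thesis using lift colH by (auto simp: rc_colouring_def)
    qed simp
  next
    fix S assume "S \<subseteq> join_V VG VH" "card S = 3"
    then show "\<exists>T. rainbow_tree ?c ?E T \<and> S \<subseteq> \<Union>T"
    proof (cases rule: join_triple_cases)
      case (GGG a b d)
      then have False using G(1) by auto
      then show ?thesis ..
    next
      case (GGH a b x)
      have "rainbow_tree ?c ?E {{Inr x, Inl a}}" using GGH by (intro rainbow_tree_edge) auto
      then have "rainbow_tree ?c ?E (insert {Inr x, Inl b} {{Inr x, Inl a}})"
        by (rule rainbow_tree_insert_leaf) (use GGH G(1) in auto)
      then show ?thesis using GGH(5) by auto
    next
      case (GHH a x y)
      obtain T where T: "rainbow_tree ?c ?E T" "Inr x \<in> \<Union>T" "Inr y \<in> \<Union>T"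
        "\<Union>T \<subseteq> range Inr" "?c ` T \<subseteq> {..<r}"
        by (rule lifted_rainbow_path_tree[OF inj_Inr colH lift GHH(2-4)])
      have "rainbow_tree ?c ?E (insert {Inr x, Inl a} T)"
        by (rule rainbow_tree_insert_leaf[OF T(1,2)]) (use T GHH in auto)
      then show ?thesis using T GHH(5) by auto
    next
      case (HHH x y z)
      obtain T where T: "rainbow_tree ?c ?E T" "Inr x \<in> \<Union>T" "Inr y \<in> \<Union>T"
        "\<Union>T \<subseteq> range Inr" "?c ` T \<subseteq> {..<r}"
        by (rule lifted_rainbow_path_tree[OF inj_Inr colH lift HHH(1,2,4)])
      show ?thesis
      proof (cases "Inr z \<in> \<Union>T")
        case True then show ?thesis using T HHH(7) by auto
      next
        case False
        have new: "Inl g2 \<notin> \<Union>T" "Inl g1 \<notin> \<Union>T" using T(4) by auto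
        have "?c {Inr x, Inl g2} = r + 1" "?c {Inl g1, Inr z} = r" using G(2) by auto
        moreover have "{Inr x, Inl g2} \<in> ?E" "{Inl g1, Inr z} \<in> ?E" using HHH G(1) by auto
        ultimately have "rainbow_tree ?c ?E
            (insert {Inl g1, Inr z} (insert {Inl g2, Inl g1} (insert {Inr x, Inl g2} T)))"
          using T(5) G(2) g21 HHH(6) by (intro rainbow_tree_insert_path3[OF T(1,2) new False]) auto
        then show ?thesis using T HHH(7) by blast
      qed
    qed
  qed
qed

lemma rx3_join_two_vertices_le:
  assumes cG: "connected_graph VG EG" "card VG = 2" and cH: "connected_graph VH EH"
  shows "rx3 (join_V VG VH) (join_E VG EG VH EH) \<le> rc VH EH + 3"
proof -
  obtain g1 g2 where VG: "VG = {g1, g2}" "g1 \<noteq> g2" using cG(2) by (auto simp: card_2_iff)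
  have "{g1, g2} \<in> EG" by (rule edge_of_connected_two_vertices[OF cG(1) VG])
  moreover have "\<forall>e\<in>EG. e \<noteq> {}" using cG(1) by (fastforce simp: connected_graph_def graph_def)
  moreover obtain cH where "rc_colouring cH VH EH (rc VH EH)" by (rule rc_colouring_rc[OF cH])
  ultimately show ?thesis by (intro rx3_le[OF rx3_colouring_two_vertex_join]) (use VG in auto)
qed

section \<open>Complete bipartite graphs\<close>

lemma graph_edgeless: "finite V \<Longrightarrow> graph V {}"
  by (simp add: graph_def)

lemma connected_Kbip:
  assumes "0 < s" "0 < t"
  shows "connected_graph (Kbip_V s t) (Kbip_E s t)"
  unfolding Kbip_V_eq_join Kbip_E_eq_join
  using assms by (intro connected_join graph_edgeless) auto

lemma three_le_rx3_Kbip: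
  assumes "2 \<le> s" "3 \<le> t"
  shows "3 \<le> rx3 (Kbip_V s t) (Kbip_E s t)"
proof (rule three_le_rx3)
  show "connected_graph (Kbip_V s t) (Kbip_E s t)" using assms by (intro connected_Kbip) auto
  show "5 \<le> card (Kbip_V s t)" using assms by (simp add: Kbip_V_eq_join card_join_V)
  show "Inl 0 \<in> Kbip_V s t" "Inl 1 \<in> Kbip_V s t" using assms by (auto simp: Kbip_V_def)
  show "{Inl 0, Inl 1} \<notin> Kbip_E s t" by (simp add: Kbip_E_eq_join Inl_pair_in_join_E_iff)
qed simp

lemma rx3_join_le_rx3_Kbip:
  assumes "finite VG" "finite VH" "card VG = s" "card VH = t" "2 \<le> s" "3 \<le> t"
  shows "rx3 (join_V VG VH) (join_E VG EG VH EH) \<le> rx3 (Kbip_V s t) (Kbip_E s t)"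
proof -
  obtain g where g: "bij_betw g {..<s} VG"
    using ex_bij_betw_nat_finite[OF assms(1)] assms(3) by (auto simp: lessThan_atLeast0)
  obtain h where h: "bij_betw h {..<t} VH"
    using ex_bij_betw_nat_finite[OF assms(2)] assms(4) by (auto simp: lessThan_atLeast0)
  have "connected_graph (Kbip_V s t) (Kbip_E s t)" using assms by (intro connected_Kbip) auto
  then obtain c where c: "rx3_colouring c (Kbip_V s t) (Kbip_E s t) (rx3 (Kbip_V s t) (Kbip_E s t))"
    by (rule rx3_colouring_rx3)
  have "0 < rx3 (Kbip_V s t) (Kbip_E s t)" using three_le_rx3_Kbip assms(5,6) by fastforce
  moreover have "\<forall>e\<in>Kbip_E s t. e \<subseteq> Kbip_V s t" by (auto simp: Kbip_E_def Kbip_V_def)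
  moreover have "inj_on (map_sum g h) (Kbip_V s t)"
    using g h by (auto simp: Kbip_V_def bij_betw_def inj_on_def)
  moreover have "map_sum g h ` Kbip_V s t = join_V VG VH"
  proof -
    have gh: "g ` {..<s} = VG" "h ` {..<t} = VH" using g h by (auto simp: bij_betw_def)
    show ?thesis by (simp add: Kbip_V_eq_join join_V_def image_Un image_image flip: gh)
  qed
  moreover have "\<forall>e\<in>Kbip_E s t. map_sum g h ` e \<in> join_E VG EG VH EH"
    using g h by (auto simp: Kbip_E_def bij_betw_def)
  ultimately obtain c' where "rx3_colouring c' (join_V VG VH) (join_E VG EG VH EH)
      (rx3 (Kbip_V s t) (Kbip_E s t))"
    by (rule rx3_colouring_image[OF c])
  then show ?thesis by (rule rx3_le)
qed

lemma is_tree_two_edges: "distinct [a, b, d] \<Longrightarrow> is_tree {{a, b}, {a, d}}"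
  using is_tree_insert_leaf[OF is_tree_edge[of a b], of a d] by (auto simp: insert_commute)

lemma is_tree_star3: "distinct [a, b, d, e] \<Longrightarrow> is_tree {{a, b}, {a, d}, {a, e}}"
  using is_tree_insert_leaf[OF is_tree_two_edges[of a b d], of a e] by (auto simp: insert_commute)

lemma is_tree_path3: "distinct [a, b, d, e] \<Longrightarrow> is_tree {{a, b}, {b, d}, {d, e}}"
  using is_tree_insert_leaf[OF is_tree_two_edges[of b a d], of d e] by (auto simp: insert_commute)

lemma set3_wlog_less:
  assumes "\<And>a b d. a < b \<Longrightarrow> b < d \<Longrightarrow> P {a, b, d}" "a \<noteq> b" "b \<noteq> d" "a \<noteq> d"
  shows "P {a::nat, b, d}"
proof -
  consider "a < b" "b < d" | "a < d" "d < b" | "b < a" "a < d" | "b < d" "d < a" | "d < a" "a < b"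
    | "d < b" "b < a"
    using assms(2-4) by linarith
  then show ?thesis
    by cases (use assms(1)[of a b d] assms(1)[of a d b] assms(1)[of b a d] assms(1)[of b d a]
        assms(1)[of d a b] assms(1)[of d b a] in \<open>simp_all add: insert_commute\<close>)
qed

text \<open>The edge between left vertex i and right vertex j is coloured by comparing i and j;
  three vertices on one side are then spanned by the star at the opposite copy of their median.\<close>

definition Kbip_colour :: "(nat + nat) set \<Rightarrow> nat" where
  "Kbip_colour e = (let i = LEAST i. Inl i \<in> e; j = LEAST j. Inr j \<in> e in
     if j < i then 0 else if j = i then 1 else 2)"

lemma Kbip_colour_cross [simp]:
  "Kbip_colour {Inl i, Inr j} = (if j < i then 0 else if j = i then 1 else 2)"
  "Kbip_colour {Inr j, Inl i} = (if j < i then 0 else if j = i then 1 else 2)"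
  by (simp_all add: Kbip_colour_def Least_equality)

lemma Kbip_edge [simp]: "i < s \<Longrightarrow> j < t \<Longrightarrow> {Inl i, Inr j} \<in> Kbip_E s t"
  and Kbip_edge' [simp]: "i < s \<Longrightarrow> j < t \<Longrightarrow> {Inr j, Inl i} \<in> Kbip_E s t"
  by (auto simp: Kbip_E_eq_join)

lemma Kbip_rainbow_GGG:
  assumes "a < s" "b < s" "d < s" "a \<noteq> b" "b \<noteq> d" "a \<noteq> d"
  shows "\<exists>T. rainbow_tree Kbip_colour (Kbip_E s s) T \<and> {Inl a, Inl b, Inl d} \<subseteq> \<Union>T"
proof -
  have "A \<subseteq> {..<s} \<longrightarrow> (\<exists>T. rainbow_tree Kbip_colour (Kbip_E s s) T \<and> Inl ` A \<subseteq> \<Union>T)"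
    if "A = {a, b, d}" for A
    unfolding that
  proof (rule set3_wlog_less[OF _ assms(4-6)], intro impI)
    fix p q r :: nat assume "p < q" "q < r" "{p, q, r} \<subseteq> {..<s}"
    then show "\<exists>T. rainbow_tree Kbip_colour (Kbip_E s s) T \<and> Inl ` {p, q, r} \<subseteq> \<Union>T"
      by (intro exI[of _ "{{Inr q, Inl p}, {Inr q, Inl q}, {Inr q, Inl r}}"])
        (auto simp: rainbow_tree_def intro!: is_tree_star3)
  qed
  then show ?thesis using assms by auto
qed

lemma Kbip_rainbow_HHH:
  assumes "x < s" "y < s" "z < s" "x \<noteq> y" "y \<noteq> z" "x \<noteq> z"
  shows "\<exists>T. rainbow_tree Kbip_colour (Kbip_E s s) T \<and> {Inr x, Inr y, Inr z} \<subseteq> \<Union>T"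
proof -
  have "A \<subseteq> {..<s} \<longrightarrow> (\<exists>T. rainbow_tree Kbip_colour (Kbip_E s s) T \<and> Inr ` A \<subseteq> \<Union>T)"
    if "A = {x, y, z}" for A
    unfolding that
  proof (rule set3_wlog_less[OF _ assms(4-6)], intro impI)
    fix p q r :: nat assume "p < q" "q < r" "{p, q, r} \<subseteq> {..<s}"
    then show "\<exists>T. rainbow_tree Kbip_colour (Kbip_E s s) T \<and> Inr ` {p, q, r} \<subseteq> \<Union>T"
      by (intro exI[of _ "{{Inl q, Inr p}, {Inl q, Inr q}, {Inl q, Inr r}}"])
        (auto simp: rainbow_tree_def intro!: is_tree_star3)
  qed
  then show ?thesis using assms by auto
qed

lemma Kbip_rainbow_GGH:
  assumes "a < s" "b < s" "x < s" "a \<noteq> b"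
  shows "\<exists>T. rainbow_tree Kbip_colour (Kbip_E s s) T \<and> {Inl a, Inl b, Inr x} \<subseteq> \<Union>T"
proof -
  have sorted: "\<exists>T. rainbow_tree Kbip_colour (Kbip_E s s) T \<and> {Inl p, Inl q, Inr x} \<subseteq> \<Union>T"
    if pq: "p < q" "q < s" for p q
  proof -
    have "Kbip_colour {Inr x, Inl p} \<noteq> Kbip_colour {Inr x, Inl q} \<or> x < p \<or> q < x"
      using pq by auto
    then consider "Kbip_colour {Inr x, Inl p} \<noteq> Kbip_colour {Inr x, Inl q}" | "x < p" | "q < x"
      by blast
    then show ?thesis
    proof cases
      case 1 then show ?thesis using pq assms(3)
        by (intro exI[of _ "{{Inr x, Inl p}, {Inr x, Inl q}}"])
          (auto simp: rainbow_tree_def intro!: is_tree_two_edges)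
    next
      case 2 then show ?thesis using pq assms(3)
        by (intro exI[of _ "{{Inr x, Inl p}, {Inl p, Inr q}, {Inr q, Inl q}}"])
          (auto simp: rainbow_tree_def intro!: is_tree_path3)
    next
      case 3 then show ?thesis using pq assms(3)
        by (intro exI[of _ "{{Inr x, Inl q}, {Inl q, Inr p}, {Inr p, Inl p}}"])
          (auto simp: rainbow_tree_def intro!: is_tree_path3)
    qed
  qed
  show ?thesis
  proof (cases "a < b")
    case True then show ?thesis using sorted assms by blast
  next
    case False
    then have "b < a" using assms by simp
    then show ?thesis using sorted[of b a] assms by (auto simp: insert_commute)
  qed
qed

lemma Kbip_rainbow_GHH:
  assumes "a < s" "x < s" "y < s" "x \<noteq> y"
  shows "\<exists>T. rainbow_tree Kbip_colour (Kbip_E s s) T \<and> {Inl a, Inr x, Inr y} \<subseteq> \<Union>T"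
proof -
  have sorted: "\<exists>T. rainbow_tree Kbip_colour (Kbip_E s s) T \<and> {Inl a, Inr p, Inr q} \<subseteq> \<Union>T"
    if pq: "p < q" "q < s" for p q
  proof -
    have "Kbip_colour {Inl a, Inr p} \<noteq> Kbip_colour {Inl a, Inr q} \<or> q < a \<or> a < p"
      using pq by auto
    then consider "Kbip_colour {Inl a, Inr p} \<noteq> Kbip_colour {Inl a, Inr q}" | "q < a" | "a < p"
      by blast
    then show ?thesis
    proof cases
      case 1 then show ?thesis using pq assms(1)
        by (intro exI[of _ "{{Inl a, Inr p}, {Inl a, Inr q}}"])
          (auto simp: rainbow_tree_def intro!: is_tree_two_edges)
    next
      case 2 then show ?thesis using pq assms(1)
        by (intro exI[of _ "{{Inl a, Inr p}, {Inr p, Inl p}, {Inl p, Inr q}}"])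
          (auto simp: rainbow_tree_def intro!: is_tree_path3)
    next
      case 3 then show ?thesis using pq assms(1)
        by (intro exI[of _ "{{Inl a, Inr q}, {Inr q, Inl q}, {Inl q, Inr p}}"])
          (auto simp: rainbow_tree_def intro!: is_tree_path3)
    qed
  qed
  show ?thesis
  proof (cases "x < y")
    case True then show ?thesis using sorted assms by blast
  next
    case False
    then have "y < x" using assms by simp
    then show ?thesis using sorted[of y x] assms by (auto simp: insert_commute)
  qed
qed

lemma rx3_colouring_Kbip_diagonal: "rx3_colouring Kbip_colour (Kbip_V s s) (Kbip_E s s) 3"
  unfolding rx3_colouring_def
proof (intro conjI allI impI ballI)
  fix e assume "e \<in> Kbip_E s s"
  then show "Kbip_colour e < 3" by (auto simp: Kbip_E_def)
next
  fix S assume "S \<subseteq> Kbip_V s s" "card S = 3"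
  then show "\<exists>T. rainbow_tree Kbip_colour (Kbip_E s s) T \<and> S \<subseteq> \<Union>T"
    unfolding Kbip_V_eq_join
  proof (cases rule: join_triple_cases)
    case (GGG a b d) then show ?thesis using Kbip_rainbow_GGG[of a s b d] by simp
  next
    case (GGH a b x) then show ?thesis using Kbip_rainbow_GGH[of a s b x] by simp
  next
    case (GHH a x y) then show ?thesis using Kbip_rainbow_GHH[of a s x y] by simp
  next
    case (HHH x y z) then show ?thesis using Kbip_rainbow_HHH[of x s y z] by simp
  qed
qed

lemma rx3_Kbip_diagonal: "3 \<le> s \<Longrightarrow> rx3 (Kbip_V s s) (Kbip_E s s) = 3"
  by (intro antisym rx3_le[OF rx3_colouring_Kbip_diagonal] three_le_rx3_Kbip) auto

lemma rx3_single_vertex: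
  assumes "connected_graph V E" "card V = 1"
  shows "rx3 V E = 0"
proof -
  have "E = {}"
  proof (rule ccontr)
    assume "E \<noteq> {}"
    then obtain e where "e \<in> E" "e \<subseteq> V" "card e = 2"
      using assms(1) by (auto simp: connected_graph_def graph_def)
    then show False using assms card_mono[of V e] by (simp add: connected_graph_def graph_def)
  qed
  moreover have "\<not> S \<subseteq> V" if "card S = 3" for S
    using that assms card_mono[of V S] by (auto simp: connected_graph_def graph_def)
  ultimately have "rx3_colouring c V E 0" for c by (auto simp: rx3_colouring_def)
  then show ?thesis using rx3_le by fastforce
qed

lemma rx3_join_balanced:
  assumes cG: "connected_graph VG EG" and cH: "connected_graph VH EH"
    and card: "card VG = s" "card VH = s" "3 \<le> s"
    and incomplete: "\<not> (complete_graph VG EG \<and> complete_graph VH EH)"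
  shows "rx3 (join_V VG VH) (join_E VG EG VH EH) = 3"
proof (rule antisym)
  have G: "graph VG EG" "VG \<noteq> {}" and H: "graph VH EH" "VH \<noteq> {}"
    using cG cH by (auto simp: connected_graph_def)
  then have fin: "finite VG" "finite VH" by (auto simp: graph_def)
  show "rx3 (join_V VG VH) (join_E VG EG VH EH) \<le> 3"
    using rx3_join_le_rx3_Kbip[OF fin card(1,2)] rx3_Kbip_diagonal card(3) by simp
  obtain p q where pq: "p \<in> join_V VG VH" "q \<in> join_V VG VH" "p \<noteq> q"
    "{p, q} \<notin> join_E VG EG VH EH"
  proof (cases "complete_graph VG EG")
    case False
    then obtain u v where "u \<in> VG" "v \<in> VG" "u \<noteq> v" "{u, v} \<notin> EG"
      unfolding complete_graph_def by blast
    then show ?thesis by (intro that[of "Inl u" "Inl v"]) (auto simp: join_V_def Inl_pair_in_join_E_iff)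
  next
    case True
    then obtain u v where "u \<in> VH" "v \<in> VH" "u \<noteq> v" "{u, v} \<notin> EH"
      using incomplete unfolding complete_graph_def by blast
    then show ?thesis by (intro that[of "Inr u" "Inr v"]) (auto simp: join_V_def Inr_pair_in_join_E_iff)
  qed
  show "3 \<le> rx3 (join_V VG VH) (join_E VG EG VH EH)"
  proof (rule three_le_rx3[OF _ _ pq])
    show "connected_graph (join_V VG VH) (join_E VG EG VH EH)"
      using G H by (auto intro: connected_join)
    show "5 \<le> card (join_V VG VH)" using card fin by (simp add: card_join_V)
  qed
qed

theorem theorem8:
  fixes VG :: "'a set" and EG :: "'a set set" and VH :: "'b set" and EH :: "'b set set"
    and s t :: nat
  assumes "connected_graph VG EG" and "connected_graph VH EH"
    and "\<not> (complete_graph VG EG \<and> complete_graph VH EH)"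
    and "card VG = s" and "card VH = t" and "s \<le> t" and "t \<ge> 3"
  shows "(s = 1 \<longrightarrow> rx3 (join_V VG VH) (join_E VG EG VH EH) \<le> rx3 VH EH + 1)
    \<and> (s = 2 \<longrightarrow> rx3 (join_V VG VH) (join_E VG EG VH EH)
          \<le> min (rc VH EH + 3) (rx3 (Kbip_V 2 t) (Kbip_E 2 t)))
    \<and> (3 \<le> s \<longrightarrow> rx3 (join_V VG VH) (join_E VG EG VH EH)
          \<le> min (max (rx3 VG EG) (rx3 VH EH) + 1) (rx3 (Kbip_V s t) (Kbip_E s t)))
    \<and> (s = t \<longrightarrow> rx3 (join_V VG VH) (join_E VG EG VH EH) = rx3 (Kbip_V s t) (Kbip_E s t)
          \<and> rx3 (Kbip_V s t) (Kbip_E s t) = 3)"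
proof -
  let ?J = "rx3 (join_V VG VH) (join_E VG EG VH EH)" and ?K = "rx3 (Kbip_V s t) (Kbip_E s t)"
  have fin: "finite VG" "finite VH" using assms(1,2) by (auto simp: connected_graph_def graph_def)
  have join_le_Kbip: "?J \<le> ?K" if "2 \<le> s"
    using rx3_join_le_rx3_Kbip[OF fin assms(4,5) that assms(7)] .
  have join_le_max: "?J \<le> max (rx3 VG EG) (rx3 VH EH) + 1" if "s \<noteq> 2"
    using rx3_join_le_max_plus_one[OF assms(1,2)] that assms(4,5,7) by simp
  show ?thesis
  proof (intro conjI impI)
    show "?J \<le> rx3 VH EH + 1" if "s = 1"
      using join_le_max rx3_single_vertex[OF assms(1)] assms(4) that by simp
    show "?J \<le> min (rc VH EH + 3) (rx3 (Kbip_V 2 t) (Kbip_E 2 t))" if "s = 2"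
      using join_le_Kbip rx3_join_two_vertices_le[OF assms(1) _ assms(2)] assms(4) that by simp
    show "?J \<le> min (max (rx3 VG EG) (rx3 VH EH) + 1) ?K" if "3 \<le> s"
      using join_le_Kbip join_le_max that by simp
    show "?J = ?K" "?K = 3" if "s = t"
      using rx3_join_balanced[OF assms(1,2)] rx3_Kbip_diagonal assms(3-5,7) that by simp_all
  qed
qed

end
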